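(* Let $\mathcal T$ be an orbital category. The monotone map $c:\mathrm{wIndSys}_{\mathcal T}\to\mathrm{Fam}_{\mathcal T}$ has a fully faithful left adjoint $\mathcal F\mapsto\underline{\mathbb F}^{triv}_{\mathcal F}$ and a fully faithful right adjoint $\mathcal F\mapsto\underline{\mathbb F}_{\mathcal F}$.
   Context: For a small category $\mathcal T$, $\mathbb F_{\mathcal T}$ is the full subcategory of $\mathrm{Fun}(\mathcal T^{op},\mathrm{Set})$ on finite coproducts of representables; $\mathcal T$ is orbital if $\mathbb F_{\mathcal T}$ has pullbacks. $\mathbb F_V:=\mathbb F_{\mathcal T,/V}$, $*_V$ terminal; for $U\to V$, $\mathrm{Res}^V_U$ is pullback and $\mathrm{Ind}^V_U$ postcomposition. A full $\mathcal T$-subcategory $\mathcal C$ assigns isomorphism-closed classes $\mathcal C_V\subseteq\mathrm{Ob}\,\mathbb F_V$ stable under restriction. For $S\in\mathbb F_V$ with orbits $U$ and $T_U\in\mathbb F_U$, $\coprod_U^ST_U:=\coprod_U\mathrm{Ind}_U^VT_U$. A $\mathcal T$-weak indexing system is a full $\mathcal T$-subcategory with $\mathcal C_V\neq\emptyset\Rightarrow *_V\in\mathcal C_V$ and closed under $\coprod^S_UT_U$ for $S\in\mathcal C_V$, $T_U\in\mathcal C_U$; $\mathrm{wIndSys}_{\mathcal T}$ is their poset under inclusion. A $\mathcal T$-family is a full subcategory $\mathcal F$ with $V\to W$, $W\in\mathcal F$ $\Rightarrow V\in\mathcal F$; $\mathrm{Fam}_{\mathcal T}$ is their poset. $c(\mathcal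 C)=\{V\mid *_V\in\mathcal C_V\}$. For a family $\mathcal F$: $\underline{\mathbb F}^{triv}_{\mathcal F}$ has $V$-value $\{*_V\}$ (up to isomorphism) for $V\in\mathcal F$ and $\emptyset$ otherwise; $\underline{\mathbb F}_{\mathcal F}$ has $V$-value all of $\mathbb F_V$ for $V\in\mathcal F$ and $\emptyset$ otherwise. A monotone map $L$ is left adjoint to $\pi$ if $L(x)\le y\iff x\le\pi(y)$; it is fully faithful if it reflects the order. *)

theory Defs
  imports Main
begin

record ('o,'m) category =
  obj :: "'o set"
  hom :: "'o \<Rightarrow> 'o \<Rightarrow> 'm set"
  cmp :: "'m \<Rightarrow> 'm \<Rightarrow> 'm"   (* cmp g f = g \<circ> f *)
  idn :: "'o \<Rightarrow> 'm"

definition small_category :: "('o,'m) category \<Rightarrow> bool" where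
  "small_category T \<longleftrightarrow>
     (\<forall>A B. hom T A B \<noteq> {} \<longrightarrow> A \<in> obj T \<and> B \<in> obj T) \<and>
     (\<forall>A\<in>obj T. idn T A \<in> hom T A A) \<and>
     (\<forall>A B C f g. f \<in> hom T A B \<longrightarrow> g \<in> hom T B C \<longrightarrow> cmp T g f \<in> hom T A C) \<and>
     (\<forall>A B C D f g h. f \<in> hom T A B \<longrightarrow> g \<in> hom T B C \<longrightarrow> h \<in> hom T C D \<longrightarrow>
        cmp T h (cmp T g f) = cmp T (cmp T h g) f) \<and>
     (\<forall>A B f. f \<in> hom T A B \<longrightarrow> cmp T (idn T B) f = f \<and> cmp T f (idn T A) = f)"

text \<open>An object of F_T is (a canonical representative of) a finite coproduct of
 representable presheaves, given by the list of representing objects. Its value at W is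
 the set of pairs (i,a) with a : W \<rightarrow> xs!i. Morphisms are natural transformations
 (extensional: undefined outside their domain).\<close>

definition FT_ob :: "('o,'m) category \<Rightarrow> 'o list set" where
  "FT_ob T = {xs. set xs \<subseteq> obj T}"

definition rep_el :: "('o,'m) category \<Rightarrow> 'o list \<Rightarrow> 'o \<Rightarrow> (nat \<times> 'm) set" where
  "rep_el T xs W = {(i,a). i < length xs \<and> a \<in> hom T W (xs ! i)}"

definition act :: "('o,'m) category \<Rightarrow> 'm \<Rightarrow> nat \<times> 'm \<Rightarrow> nat \<times> 'm" where
  "act T g x = (fst x, cmp T (snd x) g)"

type_synonym ('o,'m) ftmor = "'o \<Rightarrow> nat \<times> 'm \<Rightarrow> nat \<times> 'm"

definition FT_hom :: "('o,'m) category \<Rightarrow> 'o list \<Rightarrow> 'o list \<Rightarrow> ('o,'m) ftmor set" where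
  "FT_hom T xs ys = {\<eta>.
     (\<forall>W\<in>obj T. \<forall>x\<in>rep_el T xs W. \<eta> W x \<in> rep_el T ys W) \<and>
     (\<forall>W W' g x. W \<in> obj T \<longrightarrow> W' \<in> obj T \<longrightarrow> g \<in> hom T W' W \<longrightarrow> x \<in> rep_el T xs W \<longrightarrow>
         \<eta> W' (act T g x) = act T g (\<eta> W x)) \<and>
     (\<forall>W x. \<not> (W \<in> obj T \<and> x \<in> rep_el T xs W) \<longrightarrow> \<eta> W x = undefined)}"

definition FT_id :: "('o,'m) category \<Rightarrow> 'o list \<Rightarrow> ('o,'m) ftmor" where
  "FT_id T xs = (\<lambda>W x. if W \<in> obj T \<and> x \<in> rep_el T xs W then x else undefined)"

text \<open>Composition \<psi> \<circ> \<eta>, where xs is the domain of \<eta>.\<close>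
definition FT_comp :: "('o,'m) category \<Rightarrow> 'o list \<Rightarrow> ('o,'m) ftmor \<Rightarrow> ('o,'m) ftmor \<Rightarrow> ('o,'m) ftmor" where
  "FT_comp T xs \<psi> \<eta> = (\<lambda>W x. if W \<in> obj T \<and> x \<in> rep_el T xs W then \<psi> W (\<eta> W x) else undefined)"

definition FT_iso :: "('o,'m) category \<Rightarrow> 'o list \<Rightarrow> 'o list \<Rightarrow> ('o,'m) ftmor \<Rightarrow> bool" where
  "FT_iso T xs ys \<phi> \<longleftrightarrow> \<phi> \<in> FT_hom T xs ys \<and>
     (\<exists>\<psi>\<in>FT_hom T ys xs. FT_comp T xs \<psi> \<phi> = FT_id T xs \<and> FT_comp T ys \<phi> \<psi> = FT_id T ys)"

definition is_pullback :: "('o,'m) category \<Rightarrow> 'o list \<Rightarrow> 'o list \<Rightarrow> 'o list \<Rightarrow>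
    ('o,'m) ftmor \<Rightarrow> ('o,'m) ftmor \<Rightarrow> 'o list \<Rightarrow> ('o,'m) ftmor \<Rightarrow> ('o,'m) ftmor \<Rightarrow> bool" where
  "is_pullback T X Y Z f g P r q \<longleftrightarrow>
     P \<in> FT_ob T \<and> r \<in> FT_hom T P X \<and> q \<in> FT_hom T P Y \<and>
     FT_comp T P f r = FT_comp T P g q \<and>
     (\<forall>Q\<in>FT_ob T. \<forall>a\<in>FT_hom T Q X. \<forall>b\<in>FT_hom T Q Y. FT_comp T Q f a = FT_comp T Q g b \<longrightarrow>
        (\<exists>!m. m \<in> FT_hom T Q P \<and> FT_comp T Q r m = a \<and> FT_comp T Q q m = b))"

definition orbital :: "('o,'m) category \<Rightarrow> bool" where
  "orbital T \<longleftrightarrow> small_category T \<and>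
     (\<forall>X\<in>FT_ob T. \<forall>Y\<in>FT_ob T. \<forall>Z\<in>FT_ob T. \<forall>f\<in>FT_hom T X Z. \<forall>g\<in>FT_hom T Y Z.
        \<exists>P r q. is_pullback T X Y Z f g P r q)"

definition is_coproduct :: "('o,'m) category \<Rightarrow> nat \<Rightarrow> (nat \<Rightarrow> 'o list) \<Rightarrow> 'o list \<Rightarrow>
    (nat \<Rightarrow> ('o,'m) ftmor) \<Rightarrow> bool" where
  "is_coproduct T n Ts X j \<longleftrightarrow>
     X \<in> FT_ob T \<and> (\<forall>i<n. Ts i \<in> FT_ob T \<and> j i \<in> FT_hom T (Ts i) X) \<and>
     (\<forall>Y\<in>FT_ob T. \<forall>m. (\<forall>i<n. m i \<in> FT_hom T (Ts i) Y) \<longrightarrow>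
        (\<exists>!u. u \<in> FT_hom T X Y \<and> (\<forall>i<n. FT_comp T (Ts i) u (j i) = m i)))"

definition incl :: "('o,'m) category \<Rightarrow> 'o list \<Rightarrow> nat \<Rightarrow> ('o,'m) ftmor" where
  "incl T S i = (\<lambda>W x. if W \<in> obj T \<and> x \<in> rep_el T [S ! i] W then (i, snd x) else undefined)"

type_synonym ('o,'m) sobj = "'o list \<times> ('o,'m) ftmor"

definition slice_ob :: "('o,'m) category \<Rightarrow> 'o \<Rightarrow> ('o,'m) sobj set" where
  "slice_ob T V = {(S,p). V \<in> obj T \<and> S \<in> FT_ob T \<and> p \<in> FT_hom T S [V]}"

definition slice_iso :: "('o,'m) category \<Rightarrow> 'o \<Rightarrow> ('o,'m) sobj \<Rightarrow> ('o,'m) sobj \<Rightarrow> bool" where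
  "slice_iso T V A B \<longleftrightarrow> A \<in> slice_ob T V \<and> B \<in> slice_ob T V \<and>
     (\<exists>\<phi>. FT_iso T (fst A) (fst B) \<phi> \<and> FT_comp T (fst A) (snd B) \<phi> = snd A)"

definition terminal_slice :: "('o,'m) category \<Rightarrow> 'o \<Rightarrow> ('o,'m) sobj" where
  "terminal_slice T V = ([V], FT_id T [V])"

type_synonym ('o,'m) tsub = "'o \<Rightarrow> ('o,'m) sobj set"

definition full_T_subcat :: "('o,'m) category \<Rightarrow> ('o,'m) tsub \<Rightarrow> bool" where
  "full_T_subcat T C \<longleftrightarrow>
     (\<forall>V. C V \<subseteq> slice_ob T V) \<and>
     (\<forall>V A B. A \<in> C V \<longrightarrow> slice_iso T V A B \<longrightarrow> B \<in> C V) \<and>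
     \<comment> \<open>stability under restriction Res^V_U (pullback along U \<rightarrow> V)\<close>
     (\<forall>U V \<phi> S p P r q. U \<in> obj T \<longrightarrow> V \<in> obj T \<longrightarrow> \<phi> \<in> FT_hom T [U] [V] \<longrightarrow>
        (S,p) \<in> C V \<longrightarrow> is_pullback T S [U] [V] p \<phi> P r q \<longrightarrow> (P,q) \<in> C U)"

definition weak_indexing_system :: "('o,'m) category \<Rightarrow> ('o,'m) tsub \<Rightarrow> bool" where
  "weak_indexing_system T C \<longleftrightarrow> full_T_subcat T C \<and>
     (\<forall>V. C V \<noteq> {} \<longrightarrow> terminal_slice T V \<in> C V) \<and>
     \<comment> \<open>closure under \<coprod>^S_U T_U = \<coprod>_U Ind^V_U T_U\<close>
     (\<forall>V S p Ts qs X j h. (S,p) \<in> C V \<longrightarrow>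
        (\<forall>i<length S. (Ts i, qs i) \<in> C (S ! i)) \<longrightarrow>
        is_coproduct T (length S) Ts X j \<longrightarrow> h \<in> FT_hom T X [V] \<longrightarrow>
        (\<forall>i<length S. FT_comp T (Ts i) h (j i) =
             FT_comp T (Ts i) p (FT_comp T (Ts i) (incl T S i) (qs i))) \<longrightarrow>
        (X,h) \<in> C V)"

definition T_family :: "('o,'m) category \<Rightarrow> 'o set \<Rightarrow> bool" where
  "T_family T F \<longleftrightarrow> F \<subseteq> obj T \<and> (\<forall>V W f. f \<in> hom T V W \<longrightarrow> W \<in> F \<longrightarrow> V \<in> F)"

definition cfam :: "('o,'m) category \<Rightarrow> ('o,'m) tsub \<Rightarrow> 'o set" where
  "cfam T C = {V \<in> obj T. terminal_slice T V \<in> C V}"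

definition FF_triv :: "('o,'m) category \<Rightarrow> 'o set \<Rightarrow> ('o,'m) tsub" where
  "FF_triv T F = (\<lambda>V. if V \<in> F then {A. slice_iso T V A (terminal_slice T V)} else {})"

definition FF_full :: "('o,'m) category \<Rightarrow> 'o set \<Rightarrow> ('o,'m) tsub" where
  "FF_full T F = (\<lambda>V. if V \<in> F then slice_ob T V else {})"

end

theory Submission
  imports Defs
begin

text \<open>
  A weak indexing system C contains the terminal object *_V whenever C_V is nonempty, and
  restricting *_W along V \<rightarrow> W gives *_V. Hence c(C) is a family and C lies below the full
  system on c(C), while by isomorphism closure C contains every object isomorphic to some *_V
  with V \<in> c(C). These are the two adjunctions, and c recovers F from both constructions,
  which is full faithfulness. The one substantial point is that the objects isomorphic to
  some *_V form a weak indexing system: pullbacks of isomorphisms are isomorphisms, and an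
  object isomorphic to the representable *_V has a single orbit, so a coproduct indexed by
  its orbits has a single summand, itself isomorphic to *_V.
\<close>

lemma hom_objD: "small_category T \<Longrightarrow> f \<in> hom T A B \<Longrightarrow> A \<in> obj T \<and> B \<in> obj T"
  unfolding small_category_def by blast

lemma idn_hom: "small_category T \<Longrightarrow> A \<in> obj T \<Longrightarrow> idn T A \<in> hom T A A"
  unfolding small_category_def by blast

lemma cmp_hom: "small_category T \<Longrightarrow> f \<in> hom T A B \<Longrightarrow> g \<in> hom T B C \<Longrightarrow> cmp T g f \<in> hom T A C"
  unfolding small_category_def by blast

lemma cmp_assoc:
  "small_category T \<Longrightarrow> f \<in> hom T A B \<Longrightarrow> g \<in> hom T B C \<Longrightarrow> h \<in> hom T C D \<Longrightarrow>
   cmp T h (cmp T g f) = cmp T (cmp T h g) f"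
  unfolding small_category_def by blast

lemma cmp_idn_left: "small_category T \<Longrightarrow> f \<in> hom T A B \<Longrightarrow> cmp T (idn T B) f = f"
  unfolding small_category_def by blast

section \<open>Morphisms of F_T\<close>

lemma rep_el_iff: "x \<in> rep_el T xs W \<longleftrightarrow> fst x < length xs \<and> snd x \<in> hom T W (xs ! fst x)"
  by (cases x) (auto simp: rep_el_def)

lemma act_rep_el: "small_category T \<Longrightarrow> g \<in> hom T W' W \<Longrightarrow> x \<in> rep_el T xs W \<Longrightarrow> act T g x \<in> rep_el T xs W'"
  by (auto simp: rep_el_iff act_def intro: cmp_hom)

lemma slice_ob_iff: "(S, p) \<in> slice_ob T V \<longleftrightarrow> V \<in> obj T \<and> S \<in> FT_ob T \<and> p \<in> FT_hom T S [V]"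
  by (simp add: slice_ob_def)

lemma FT_hom_rep_el: "\<eta> \<in> FT_hom T xs ys \<Longrightarrow> W \<in> obj T \<Longrightarrow> x \<in> rep_el T xs W \<Longrightarrow> \<eta> W x \<in> rep_el T ys W"
  unfolding FT_hom_def by blast

lemma FT_hom_natural:
  "\<eta> \<in> FT_hom T xs ys \<Longrightarrow> W \<in> obj T \<Longrightarrow> W' \<in> obj T \<Longrightarrow> g \<in> hom T W' W \<Longrightarrow> x \<in> rep_el T xs W \<Longrightarrow>
   \<eta> W' (act T g x) = act T g (\<eta> W x)"
  unfolding FT_hom_def by blast

lemma FT_hom_undefined: "\<eta> \<in> FT_hom T xs ys \<Longrightarrow> \<not> (W \<in> obj T \<and> x \<in> rep_el T xs W) \<Longrightarrow> \<eta> W x = undefined"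
  unfolding FT_hom_def by blast

lemma FT_id_hom: assumes sc: "small_category T" shows "FT_id T xs \<in> FT_hom T xs xs"
  unfolding FT_hom_def FT_id_def using act_rep_el[OF sc] by auto

lemma FT_comp_hom:
  assumes sc: "small_category T" and \<eta>: "\<eta> \<in> FT_hom T xs ys" and \<psi>: "\<psi> \<in> FT_hom T ys zs"
  shows "FT_comp T xs \<psi> \<eta> \<in> FT_hom T xs zs"
  unfolding FT_hom_def
proof (intro CollectI conjI allI impI ballI)
  fix W x assume "W \<in> obj T" "x \<in> rep_el T xs W"
  then show "FT_comp T xs \<psi> \<eta> W x \<in> rep_el T zs W"
    using FT_hom_rep_el[OF \<eta>] FT_hom_rep_el[OF \<psi>] by (simp add: FT_comp_def)
next
  fix W W' g x assume a: "W \<in> obj T" "W' \<in> obj T" "g \<in> hom T W' W" "x \<in> rep_el T xs W"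
  have "FT_comp T xs \<psi> \<eta> W' (act T g x) = \<psi> W' (\<eta> W' (act T g x))"
    using a act_rep_el[OF sc a(3,4)] by (simp add: FT_comp_def)
  also have "\<dots> = \<psi> W' (act T g (\<eta> W x))" using FT_hom_natural[OF \<eta> a] by simp
  also have "\<dots> = act T g (\<psi> W (\<eta> W x))"
    using FT_hom_natural[OF \<psi> a(1-3) FT_hom_rep_el[OF \<eta> a(1,4)]] .
  finally show "FT_comp T xs \<psi> \<eta> W' (act T g x) = act T g (FT_comp T xs \<psi> \<eta> W x)"
    using a by (simp add: FT_comp_def)
next
  fix W x assume "\<not> (W \<in> obj T \<and> x \<in> rep_el T xs W)"
  then show "FT_comp T xs \<psi> \<eta> W x = undefined" unfolding FT_comp_def by meson
qed

lemma FT_comp_id_left: "\<eta> \<in> FT_hom T xs ys \<Longrightarrow> FT_comp T xs (FT_id T ys) \<eta> = \<eta>"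
  by (intro ext) (auto simp: FT_comp_def FT_id_def FT_hom_rep_el FT_hom_undefined)

lemma FT_comp_id_right: "\<eta> \<in> FT_hom T xs ys \<Longrightarrow> FT_comp T xs \<eta> (FT_id T xs) = \<eta>"
  by (intro ext) (auto simp: FT_comp_def FT_id_def FT_hom_undefined)

lemma FT_comp_assoc:
  "\<eta> \<in> FT_hom T xs ys \<Longrightarrow> FT_comp T xs \<chi> (FT_comp T xs \<psi> \<eta>) = FT_comp T xs (FT_comp T ys \<chi> \<psi>) \<eta>"
  unfolding FT_comp_def by (intro ext) (simp add: FT_hom_rep_el)

lemma FT_iso_hom: "FT_iso T xs ys \<phi> \<Longrightarrow> \<phi> \<in> FT_hom T xs ys"
  unfolding FT_iso_def by blast

lemma FT_iso_inv:
  "FT_iso T xs ys \<phi> \<Longrightarrow>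
   \<exists>\<psi>. FT_iso T ys xs \<psi> \<and> FT_comp T xs \<psi> \<phi> = FT_id T xs \<and> FT_comp T ys \<phi> \<psi> = FT_id T ys"
  unfolding FT_iso_def by blast

lemma FT_iso_id: "small_category T \<Longrightarrow> FT_iso T xs xs (FT_id T xs)"
  unfolding FT_iso_def using FT_id_hom FT_comp_id_left by blast

lemma FT_iso_comp:
  assumes sc: "small_category T" and \<phi>: "FT_iso T xs ys \<phi>" and \<chi>: "FT_iso T ys zs \<chi>"
  shows "FT_iso T xs zs (FT_comp T xs \<chi> \<phi>)"
proof -
  obtain \<phi>' where \<phi>': "\<phi>' \<in> FT_hom T ys xs"
      "FT_comp T xs \<phi>' \<phi> = FT_id T xs" "FT_comp T ys \<phi> \<phi>' = FT_id T ys"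
    using \<phi> unfolding FT_iso_def by blast
  obtain \<chi>' where \<chi>': "\<chi>' \<in> FT_hom T zs ys"
      "FT_comp T ys \<chi>' \<chi> = FT_id T ys" "FT_comp T zs \<chi> \<chi>' = FT_id T zs"
    using \<chi> unfolding FT_iso_def by blast
  have \<phi>h: "\<phi> \<in> FT_hom T xs ys" and \<chi>h: "\<chi> \<in> FT_hom T ys zs" using \<phi> \<chi> FT_iso_hom by blast+
  have "FT_comp T xs (FT_comp T zs \<phi>' \<chi>') (FT_comp T xs \<chi> \<phi>)
      = FT_comp T xs (FT_comp T ys \<phi>' (FT_comp T ys \<chi>' \<chi>)) \<phi>"
    using FT_comp_assoc[OF \<phi>h] FT_comp_assoc[OF \<chi>h] by metis
  also have "\<dots> = FT_id T xs" using \<chi>'(2) \<phi>'(2) FT_comp_id_right[OF \<phi>'(1)] by simp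
  finally have left: "FT_comp T xs (FT_comp T zs \<phi>' \<chi>') (FT_comp T xs \<chi> \<phi>) = FT_id T xs" .
  have "FT_comp T zs (FT_comp T xs \<chi> \<phi>) (FT_comp T zs \<phi>' \<chi>')
      = FT_comp T zs (FT_comp T ys \<chi> (FT_comp T ys \<phi> \<phi>')) \<chi>'"
    using FT_comp_assoc[OF \<chi>'(1)] FT_comp_assoc[OF \<phi>'(1)] by metis
  also have "\<dots> = FT_id T zs" using \<phi>'(3) \<chi>'(3) FT_comp_id_right[OF \<chi>h] by simp
  finally have right: "FT_comp T zs (FT_comp T xs \<chi> \<phi>) (FT_comp T zs \<phi>' \<chi>') = FT_id T zs" .
  show ?thesis unfolding FT_iso_def
    using left right FT_comp_hom[OF sc \<phi>h \<chi>h] FT_comp_hom[OF sc \<chi>'(1) \<phi>'(1)] by blast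
qed

lemma FT_iso_cancel_right:
  assumes sc: "small_category T" and \<phi>: "FT_iso T xs ys \<phi>" and \<psi>: "\<psi> \<in> FT_hom T ys zs"
    and \<psi>\<phi>: "FT_iso T xs zs (FT_comp T xs \<psi> \<phi>)"
  shows "FT_iso T ys zs \<psi>"
proof -
  obtain \<phi>' where \<phi>': "FT_iso T ys xs \<phi>'" "FT_comp T ys \<phi> \<phi>' = FT_id T ys"
    using FT_iso_inv[OF \<phi>] by blast
  have "\<psi> = FT_comp T ys \<psi> (FT_comp T ys \<phi> \<phi>')" using \<phi>'(2) FT_comp_id_right[OF \<psi>] by simp
  also have "\<dots> = FT_comp T ys (FT_comp T xs \<psi> \<phi>) \<phi>'" using FT_comp_assoc[OF FT_iso_hom[OF \<phi>'(1)]] .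
  finally show ?thesis using FT_iso_comp[OF sc \<phi>'(1) \<psi>\<phi>] by simp
qed

section \<open>Representables, pullbacks and coproducts\<close>

definition rep_map :: "('o,'m) category \<Rightarrow> 'o \<Rightarrow> 'm \<Rightarrow> ('o,'m) ftmor" where
  "rep_map T V f = (\<lambda>X x. if X \<in> obj T \<and> x \<in> rep_el T [V] X then (0, cmp T f (snd x)) else undefined)"

lemma rep_map_hom:
  assumes sc: "small_category T" and f: "f \<in> hom T V W"
  shows "rep_map T V f \<in> FT_hom T [V] [W]"
  unfolding FT_hom_def
proof (intro CollectI conjI allI impI ballI)
  fix X x assume "X \<in> obj T" "x \<in> rep_el T [V] X"
  then show "rep_map T V f X x \<in> rep_el T [W] X"
    using f cmp_hom[OF sc] by (auto simp: rep_map_def rep_el_iff)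
next
  fix X X' g x assume a: "X \<in> obj T" "X' \<in> obj T" "g \<in> hom T X' X" "x \<in> rep_el T [V] X"
  have "snd x \<in> hom T X V" using a(4) by (auto simp: rep_el_iff)
  then show "rep_map T V f X' (act T g x) = act T g (rep_map T V f X x)"
    using a act_rep_el[OF sc a(3,4)] cmp_assoc[OF sc a(3) _ f] by (simp add: rep_map_def act_def)
next
  fix X x assume "\<not> (X \<in> obj T \<and> x \<in> rep_el T [V] X)"
  then show "rep_map T V f X x = undefined" unfolding rep_map_def by meson
qed

lemma FT_hom_representable_hom:
  assumes sc: "small_category T" and U: "U \<in> obj T" and \<phi>: "\<phi> \<in> FT_hom T [U] [V]"
  shows "\<exists>f. f \<in> hom T U V"
proof -
  have "(0, idn T U) \<in> rep_el T [U] U" using idn_hom[OF sc U] by (simp add: rep_el_iff)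
  then have "\<phi> U (0, idn T U) \<in> rep_el T [V] U" using FT_hom_rep_el[OF \<phi> U] by blast
  then show ?thesis by (auto simp: rep_el_iff)
qed

lemma is_pullback_id_rep_map:
  assumes sc: "small_category T" and f: "f \<in> hom T V W"
  shows "is_pullback T [W] [V] [W] (FT_id T [W]) (rep_map T V f) [V] (rep_map T V f) (FT_id T [V])"
proof -
  have y: "rep_map T V f \<in> FT_hom T [V] [W]" using rep_map_hom[OF sc f] .
  show ?thesis unfolding is_pullback_def
  proof (intro conjI ballI impI)
    show "[V] \<in> FT_ob T" using hom_objD[OF sc f] by (simp add: FT_ob_def)
    show "FT_id T [V] \<in> FT_hom T [V] [V]" using FT_id_hom[OF sc] .
    show "FT_comp T [V] (FT_id T [W]) (rep_map T V f) = FT_comp T [V] (rep_map T V f) (FT_id T [V])"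
      using FT_comp_id_left[OF y] FT_comp_id_right[OF y] by simp
  next
    fix Q a b assume a: "a \<in> FT_hom T Q [W]" and b: "b \<in> FT_hom T Q [V]"
      and e: "FT_comp T Q (FT_id T [W]) a = FT_comp T Q (rep_map T V f) b"
    show "\<exists>!m. m \<in> FT_hom T Q [V] \<and> FT_comp T Q (rep_map T V f) m = a \<and> FT_comp T Q (FT_id T [V]) m = b"
    proof (rule ex1I[of _ b])
      show "b \<in> FT_hom T Q [V] \<and> FT_comp T Q (rep_map T V f) b = a \<and> FT_comp T Q (FT_id T [V]) b = b"
        using b e FT_comp_id_left[OF a] FT_comp_id_left[OF b] by simp
    qed (use FT_comp_id_left in metis)
  qed (use y in simp)
qed

lemma is_pullback_endo_eq_id:
  assumes sc: "small_category T" and pb: "is_pullback T X Y Z f g P r q"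
    and m: "m \<in> FT_hom T P P" "FT_comp T P r m = r" "FT_comp T P q m = q"
  shows "m = FT_id T P"
proof -
  have P: "P \<in> FT_ob T" and r: "r \<in> FT_hom T P X" and q: "q \<in> FT_hom T P Y"
    and sq: "FT_comp T P f r = FT_comp T P g q"
    and up: "\<forall>Q\<in>FT_ob T. \<forall>a\<in>FT_hom T Q X. \<forall>b\<in>FT_hom T Q Y. FT_comp T Q f a = FT_comp T Q g b \<longrightarrow>
        (\<exists>!m. m \<in> FT_hom T Q P \<and> FT_comp T Q r m = a \<and> FT_comp T Q q m = b)"
    using pb unfolding is_pullback_def by blast+
  have "\<exists>!m. m \<in> FT_hom T P P \<and> FT_comp T P r m = r \<and> FT_comp T P q m = q"
    using up P r q sq by blast
  then show ?thesis
    using m FT_id_hom[OF sc] FT_comp_id_right[OF r] FT_comp_id_right[OF q] by blast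
qed

lemma is_pullback_FT_iso:
  assumes sc: "small_category T" and Y: "Y \<in> FT_ob T" and g: "g \<in> FT_hom T Y Z"
    and f: "FT_iso T X Z f" and pb: "is_pullback T X Y Z f g P r q"
  shows "FT_iso T P Y q"
proof -
  obtain f' where f': "f' \<in> FT_hom T Z X" "FT_comp T X f' f = FT_id T X" "FT_comp T Z f f' = FT_id T Z"
    using f unfolding FT_iso_def by blast
  have r: "r \<in> FT_hom T P X" and q: "q \<in> FT_hom T P Y" and sq: "FT_comp T P f r = FT_comp T P g q"
    and up: "\<forall>Q\<in>FT_ob T. \<forall>a\<in>FT_hom T Q X. \<forall>b\<in>FT_hom T Q Y. FT_comp T Q f a = FT_comp T Q g b \<longrightarrow>
        (\<exists>!m. m \<in> FT_hom T Q P \<and> FT_comp T Q r m = a \<and> FT_comp T Q q m = b)"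
    using pb unfolding is_pullback_def by blast+
  define a where "a = FT_comp T Y f' g"
  have a: "a \<in> FT_hom T Y X" unfolding a_def using FT_comp_hom[OF sc g f'(1)] .
  have "FT_comp T Y f a = FT_comp T Y (FT_comp T Z f f') g" unfolding a_def using FT_comp_assoc[OF g] .
  also have "\<dots> = FT_comp T Y g (FT_id T Y)" using f'(3) FT_comp_id_left[OF g] FT_comp_id_right[OF g] by simp
  finally have "\<exists>!m. m \<in> FT_hom T Y P \<and> FT_comp T Y r m = a \<and> FT_comp T Y q m = FT_id T Y"
    using up[rule_format, OF Y a FT_id_hom[OF sc]] by blast
  then obtain m where m: "m \<in> FT_hom T Y P" "FT_comp T Y r m = a" "FT_comp T Y q m = FT_id T Y"
    by blast
  \<comment> \<open>\<open>m\<close> is a section of \<open>q\<close>; the universal property shows it is also a retraction\<close>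
  have "FT_comp T P r (FT_comp T P m q) = FT_comp T P f' (FT_comp T P g q)"
    using FT_comp_assoc[OF q] m(2) unfolding a_def by metis
  also have "\<dots> = FT_comp T P (FT_comp T X f' f) r" using sq FT_comp_assoc[OF r] by metis
  also have "\<dots> = r" using f'(2) FT_comp_id_left[OF r] by simp
  finally have "FT_comp T P r (FT_comp T P m q) = r" .
  moreover have "FT_comp T P q (FT_comp T P m q) = q"
    using FT_comp_assoc[OF q, of q m] m(3) FT_comp_id_left[OF q] by simp
  ultimately have "FT_comp T P m q = FT_id T P"
    using is_pullback_endo_eq_id[OF sc pb FT_comp_hom[OF sc q m(1)]] by blast
  then show ?thesis unfolding FT_iso_def using q m by blast
qed

lemma is_coproduct_1D:
  assumes c: "is_coproduct T 1 Ts X j" and Y: "Y \<in> FT_ob T" and \<mu>: "\<mu> \<in> FT_hom T (Ts 0) Y"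
  shows "\<exists>!u. u \<in> FT_hom T X Y \<and> FT_comp T (Ts 0) u (j 0) = \<mu>"
proof -
  have "\<forall>Y\<in>FT_ob T. \<forall>m. (\<forall>i<1. m i \<in> FT_hom T (Ts i) Y) \<longrightarrow>
      (\<exists>!u. u \<in> FT_hom T X Y \<and> (\<forall>i<1. FT_comp T (Ts i) u (j i) = m i))"
    using c unfolding is_coproduct_def by (rule conjunct2[OF conjunct2])
  from this[rule_format, of Y "\<lambda>_. \<mu>"] show ?thesis using Y \<mu> by simp
qed

lemma is_coproduct_1_FT_iso:
  assumes sc: "small_category T" and c: "is_coproduct T 1 Ts X j"
  shows "FT_iso T (Ts 0) X (j 0)"
proof -
  have X: "X \<in> FT_ob T" and T0: "Ts 0 \<in> FT_ob T" and j: "j 0 \<in> FT_hom T (Ts 0) X"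
    using c unfolding is_coproduct_def by auto
  obtain u where u: "u \<in> FT_hom T X (Ts 0)" "FT_comp T (Ts 0) u (j 0) = FT_id T (Ts 0)"
    using is_coproduct_1D[OF c T0 FT_id_hom[OF sc]] by blast
  have "FT_comp T (Ts 0) (FT_comp T X (j 0) u) (j 0) = j 0"
    using FT_comp_assoc[OF j, of "j 0" u] u(2) FT_comp_id_right[OF j] by simp
  then have "FT_comp T X (j 0) u = FT_id T X"
    using is_coproduct_1D[OF c X j] FT_comp_hom[OF sc u(1) j] FT_id_hom[OF sc] FT_comp_id_left[OF j]
    by blast
  then show ?thesis unfolding FT_iso_def using j u by blast
qed

lemma FT_iso_representable_length:
  assumes sc: "small_category T" and S: "S \<in> FT_ob T" and V: "V \<in> obj T" and p: "FT_iso T S [V] p"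
  shows "length S = 1"
proof -
  obtain \<psi> where \<psi>: "\<psi> \<in> FT_hom T [V] S" "FT_comp T S \<psi> p = FT_id T S"
    using p unfolding FT_iso_def by blast
  have ph: "p \<in> FT_hom T S [V]" using FT_iso_hom[OF p] .
  have v0: "(0, idn T V) \<in> rep_el T [V] V" using idn_hom[OF sc V] by (simp add: rep_el_iff)
  define e where "e = \<psi> V (0, idn T V)"
  have e: "e \<in> rep_el T S V" unfolding e_def using FT_hom_rep_el[OF \<psi>(1) V v0] .
  \<comment> \<open>by naturality of \<open>\<psi>\<close>, the identity point of every orbit lies in the orbit of \<open>e\<close>\<close>
  have orbit_index: "i = fst e" if i: "i < length S" for i
  proof -
    have Si: "S ! i \<in> obj T" using S i by (auto simp: FT_ob_def)
    have x: "(i, idn T (S ! i)) \<in> rep_el T S (S ! i)" using idn_hom[OF sc Si] i by (simp add: rep_el_iff)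
    obtain b where b: "p (S ! i) (i, idn T (S ! i)) = (0, b)" "b \<in> hom T (S ! i) V"
      using FT_hom_rep_el[OF ph Si x] by (cases "p (S ! i) (i, idn T (S ! i))") (auto simp: rep_el_iff)
    have "\<psi> (S ! i) (0, b) = \<psi> (S ! i) (act T b (0, idn T V))"
      using cmp_idn_left[OF sc b(2)] by (simp add: act_def)
    also have "\<dots> = act T b e" unfolding e_def by (rule FT_hom_natural[OF \<psi>(1) V Si b(2) v0])
    finally have "\<psi> (S ! i) (0, b) = act T b e" .
    moreover have "\<psi> (S ! i) (p (S ! i) (i, idn T (S ! i))) = (i, idn T (S ! i))"
      using fun_cong[OF fun_cong[OF \<psi>(2), of "S ! i"], of "(i, idn T (S ! i))"] Si x
      by (simp add: FT_comp_def FT_id_def)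
    ultimately show ?thesis using b(1) by (simp add: act_def)
  qed
  have "fst e < length S" using e by (simp add: rep_el_iff)
  moreover have "\<not> 1 < length S"
  proof
    assume "1 < length S"
    then have "0 = fst e" and "1 = fst e" using orbit_index[of 0] orbit_index[of 1] by linarith+
    then show False by simp
  qed
  ultimately show ?thesis by linarith
qed

lemma incl_singleton: "incl T [V] 0 = FT_id T [V]"
  by (intro ext) (auto simp: incl_def FT_id_def rep_el_iff)

section \<open>Weak indexing systems and families\<close>

lemma T_family_closed_FT_hom:
  assumes sc: "small_category T" and F: "T_family T F" and U: "U \<in> obj T"
    and \<phi>: "\<phi> \<in> FT_hom T [U] [V]" and V: "V \<in> F"
  shows "U \<in> F"
  using FT_hom_representable_hom[OF sc U \<phi>] F V unfolding T_family_def by blast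

lemma terminal_slice_slice_ob: "small_category T \<Longrightarrow> V \<in> obj T \<Longrightarrow> terminal_slice T V \<in> slice_ob T V"
  by (auto simp: terminal_slice_def slice_ob_def FT_ob_def intro: FT_id_hom)

lemma slice_iso_terminal_iff:
  assumes sc: "small_category T" and V: "V \<in> obj T"
  shows "slice_iso T V A (terminal_slice T V) \<longleftrightarrow> A \<in> slice_ob T V \<and> FT_iso T (fst A) [V] (snd A)"
proof
  assume "slice_iso T V A (terminal_slice T V)"
  then obtain \<phi> where "A \<in> slice_ob T V" "FT_iso T (fst A) [V] \<phi>"
      "FT_comp T (fst A) (FT_id T [V]) \<phi> = snd A"
    unfolding slice_iso_def terminal_slice_def by auto
  then show "A \<in> slice_ob T V \<and> FT_iso T (fst A) [V] (snd A)"
    using FT_comp_id_left[OF FT_iso_hom] by metis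
next
  assume A: "A \<in> slice_ob T V \<and> FT_iso T (fst A) [V] (snd A)"
  then show "slice_iso T V A (terminal_slice T V)"
    unfolding slice_iso_def
    using terminal_slice_slice_ob[OF sc V] FT_comp_id_left[OF FT_iso_hom[OF conjunct2[OF A]]]
    by (auto simp: terminal_slice_def)
qed

lemma T_family_cfam:
  assumes sc: "small_category T" and C: "weak_indexing_system T C"
  shows "T_family T (cfam T C)"
  unfolding T_family_def
proof (intro conjI allI impI)
  show "cfam T C \<subseteq> obj T" by (auto simp: cfam_def)
next
  fix V W f assume f: "f \<in> hom T V W" and W: "W \<in> cfam T C"
  have ob: "V \<in> obj T" "W \<in> obj T" using hom_objD[OF sc f] by auto
  have "full_T_subcat T C" using C unfolding weak_indexing_system_def by blast
  moreover have "([W], FT_id T [W]) \<in> C W" using W by (simp add: cfam_def terminal_slice_def)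
  ultimately have "([V], FT_id T [V]) \<in> C V"
    using ob rep_map_hom[OF sc f] is_pullback_id_rep_map[OF sc f] unfolding full_T_subcat_def by blast
  then show "V \<in> cfam T C" using ob by (simp add: cfam_def terminal_slice_def)
qed

lemma weak_indexing_system_FF_full:
  assumes sc: "small_category T" and F: "T_family T F"
  shows "weak_indexing_system T (FF_full T F)"
proof -
  have Fo: "F \<subseteq> obj T" using F by (simp add: T_family_def)
  have "full_T_subcat T (FF_full T F)"
    unfolding full_T_subcat_def
  proof (intro conjI allI impI)
    fix V show "FF_full T F V \<subseteq> slice_ob T V" by (simp add: FF_full_def)
  next
    fix V A B assume "A \<in> FF_full T F V" "slice_iso T V A B"
    then show "B \<in> FF_full T F V" by (auto simp: FF_full_def slice_iso_def split: if_splits)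
  next
    fix U V \<phi> S p P r q
    assume U: "U \<in> obj T" and \<phi>: "\<phi> \<in> FT_hom T [U] [V]"
      and Sp: "(S, p) \<in> FF_full T F V" and pb: "is_pullback T S [U] [V] p \<phi> P r q"
    have "U \<in> F"
      using T_family_closed_FT_hom[OF sc F U \<phi>] Sp by (simp add: FF_full_def split: if_splits)
    then show "(P, q) \<in> FF_full T F U"
      using U pb by (simp add: FF_full_def slice_ob_def is_pullback_def)
  qed
  then show ?thesis unfolding weak_indexing_system_def
    using Fo terminal_slice_slice_ob[OF sc]
    by (auto simp: FF_full_def slice_ob_def is_coproduct_def split: if_splits)
qed

lemma FF_triv_iff:
  assumes sc: "small_category T" and Fo: "F \<subseteq> obj T"
  shows "A \<in> FF_triv T F V \<longleftrightarrow> V \<in> F \<and> A \<in> slice_ob T V \<and> FT_iso T (fst A) [V] (snd A)"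
  using slice_iso_terminal_iff[OF sc, of V A] Fo by (auto simp: FF_triv_def)

lemma terminal_slice_FF_triv:
  "small_category T \<Longrightarrow> F \<subseteq> obj T \<Longrightarrow> V \<in> F \<Longrightarrow> terminal_slice T V \<in> FF_triv T F V"
  using FF_triv_iff terminal_slice_slice_ob FT_iso_id by (fastforce simp: terminal_slice_def)

lemma FF_triv_slice_iso_closed:
  assumes sc: "small_category T" and Fo: "F \<subseteq> obj T"
    and A: "A \<in> FF_triv T F V" and AB: "slice_iso T V A B"
  shows "B \<in> FF_triv T F V"
proof -
  obtain \<phi> where \<phi>: "FT_iso T (fst A) (fst B) \<phi>" "FT_comp T (fst A) (snd B) \<phi> = snd A"
    and B: "B \<in> slice_ob T V"
    using AB unfolding slice_iso_def by blast
  have "snd B \<in> FT_hom T (fst B) [V]" using B by (cases B) (simp add: slice_ob_iff)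
  then have "FT_iso T (fst B) [V] (snd B)"
    using FT_iso_cancel_right[OF sc \<phi>(1)] \<phi>(2) A FF_triv_iff[OF sc Fo] by simp
  then show ?thesis using A B FF_triv_iff[OF sc Fo] by simp
qed

lemma FF_triv_restriction_closed:
  assumes sc: "small_category T" and F: "T_family T F" and U: "U \<in> obj T"
    and \<phi>: "\<phi> \<in> FT_hom T [U] [V]" and Sp: "(S, p) \<in> FF_triv T F V"
    and pb: "is_pullback T S [U] [V] p \<phi> P r q"
  shows "(P, q) \<in> FF_triv T F U"
proof -
  have Fo: "F \<subseteq> obj T" using F by (simp add: T_family_def)
  have "V \<in> F" and p: "FT_iso T S [V] p" using Sp FF_triv_iff[OF sc Fo] by auto
  then have "U \<in> F" using T_family_closed_FT_hom[OF sc F U \<phi>] by blast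
  moreover have "FT_iso T P [U] q"
    using is_pullback_FT_iso[OF sc _ \<phi> p pb] U by (simp add: FT_ob_def)
  ultimately show ?thesis using FF_triv_iff[OF sc Fo] U pb by (simp add: slice_ob_iff is_pullback_def)
qed

lemma FF_triv_coproduct_closed:
  assumes sc: "small_category T" and Fo: "F \<subseteq> obj T"
    and Sp: "(S, p) \<in> FF_triv T F V" and Tq: "\<forall>i<length S. (Ts i, qs i) \<in> FF_triv T F (S ! i)"
    and c: "is_coproduct T (length S) Ts X j" and h: "h \<in> FT_hom T X [V]"
    and hj: "\<forall>i<length S. FT_comp T (Ts i) h (j i) =
        FT_comp T (Ts i) p (FT_comp T (Ts i) (incl T S i) (qs i))"
  shows "(X, h) \<in> FF_triv T F V"
proof -
  have V: "V \<in> F" "V \<in> obj T" and p: "FT_iso T S [V] p" and S: "S \<in> FT_ob T"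
    using Sp FF_triv_iff[OF sc Fo] Fo by (auto simp: slice_ob_iff)
  have l: "length S = 1" using FT_iso_representable_length[OF sc S V(2) p] .
  then have S0: "S = [S ! 0]" by (cases S) auto
  have q0: "FT_iso T (Ts 0) S (qs 0)" using Tq l FF_triv_iff[OF sc Fo] S0 by (metis fst_conv less_one snd_conv)
  have "FT_comp T (Ts 0) h (j 0) = FT_comp T (Ts 0) p (qs 0)"
    using hj l incl_singleton[of T "S ! 0"] S0 FT_comp_id_left[OF FT_iso_hom[OF q0]] by simp
  then have "FT_iso T X [V] h"
    using FT_iso_cancel_right[OF sc is_coproduct_1_FT_iso[OF sc] h] c l FT_iso_comp[OF sc q0 p] by simp
  moreover have "X \<in> FT_ob T" using c by (simp add: is_coproduct_def)
  ultimately show ?thesis using FF_triv_iff[OF sc Fo] V h by (simp add: slice_ob_iff)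
qed

lemma weak_indexing_system_FF_triv:
  assumes sc: "small_category T" and F: "T_family T F"
  shows "weak_indexing_system T (FF_triv T F)"
proof -
  have Fo: "F \<subseteq> obj T" using F by (simp add: T_family_def)
  have "full_T_subcat T (FF_triv T F)"
    unfolding full_T_subcat_def
    using FF_triv_iff[OF sc Fo] FF_triv_slice_iso_closed[OF sc Fo] FF_triv_restriction_closed[OF sc F]
    by blast
  moreover have "terminal_slice T V \<in> FF_triv T F V" if "FF_triv T F V \<noteq> {}" for V
    using that terminal_slice_FF_triv[OF sc Fo] by (auto simp: FF_triv_def split: if_splits)
  ultimately show ?thesis
    unfolding weak_indexing_system_def using FF_triv_coproduct_closed[OF sc Fo] by blast
qed

section \<open>The adjunctions\<close>

lemma FF_triv_le_iff:
  assumes sc: "small_category T" and Fo: "F \<subseteq> obj T" and C: "full_T_subcat T C"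
  shows "FF_triv T F \<le> C \<longleftrightarrow> F \<subseteq> cfam T C"
proof
  assume "FF_triv T F \<le> C"
  then show "F \<subseteq> cfam T C"
    using terminal_slice_FF_triv[OF sc Fo] Fo by (auto simp: cfam_def le_fun_def)
next
  assume F: "F \<subseteq> cfam T C"
  show "FF_triv T F \<le> C" unfolding le_fun_def
  proof (intro allI subsetI)
    fix V A assume "A \<in> FF_triv T F V"
    then have V: "V \<in> F" "V \<in> obj T" and A: "A \<in> slice_ob T V" "FT_iso T (fst A) [V] (snd A)"
      using FF_triv_iff[OF sc Fo] Fo by auto
    obtain \<psi> where "FT_iso T [V] (fst A) \<psi>" "FT_comp T [V] (snd A) \<psi> = FT_id T [V]"
      using FT_iso_inv[OF A(2)] by blast
    then have "slice_iso T V (terminal_slice T V) A"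
      unfolding slice_iso_def using terminal_slice_slice_ob[OF sc V(2)] A by (auto simp: terminal_slice_def)
    moreover have "terminal_slice T V \<in> C V" using F V by (auto simp: cfam_def)
    ultimately show "A \<in> C V" using C unfolding full_T_subcat_def by blast
  qed
qed

lemma cfam_subset_iff_le_FF_full:
  assumes C: "weak_indexing_system T C"
  shows "cfam T C \<subseteq> F \<longleftrightarrow> C \<le> FF_full T F"
proof
  assume F: "cfam T C \<subseteq> F"
  show "C \<le> FF_full T F" unfolding le_fun_def
  proof (intro allI subsetI)
    fix V A assume A: "A \<in> C V"
    have "C V \<subseteq> slice_ob T V"
      using C unfolding weak_indexing_system_def full_T_subcat_def by (elim conjE) (rule spec)
    moreover have "terminal_slice T V \<in> C V"
      using A C unfolding weak_indexing_system_def by blast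
    ultimately have "V \<in> cfam T C"
      by (auto simp: cfam_def terminal_slice_def slice_ob_iff)
    then show "A \<in> FF_full T F V" using A F \<open>C V \<subseteq> slice_ob T V\<close> by (auto simp: FF_full_def)
  qed
next
  assume "C \<le> FF_full T F"
  then show "cfam T C \<subseteq> F" by (auto simp: cfam_def le_fun_def FF_full_def split: if_splits)
qed

lemma FF_triv_mono_iff:
  assumes sc: "small_category T" and Fo: "F \<subseteq> obj T"
  shows "FF_triv T F \<le> FF_triv T G \<longleftrightarrow> F \<subseteq> G"
proof
  assume le: "FF_triv T F \<le> FF_triv T G"
  show "F \<subseteq> G"
  proof
    fix V assume "V \<in> F"
    then have "terminal_slice T V \<in> FF_triv T G V"
      using le terminal_slice_FF_triv[OF sc Fo] by (auto simp: le_fun_def)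
    then show "V \<in> G" by (simp add: FF_triv_def split: if_splits)
  qed
qed (auto simp: le_fun_def FF_triv_def)

lemma FF_full_mono_iff:
  assumes sc: "small_category T" and Fo: "F \<subseteq> obj T"
  shows "FF_full T F \<le> FF_full T G \<longleftrightarrow> F \<subseteq> G"
proof
  assume le: "FF_full T F \<le> FF_full T G"
  show "F \<subseteq> G"
  proof
    fix V assume "V \<in> F"
    then have "terminal_slice T V \<in> FF_full T F V"
      using terminal_slice_slice_ob[OF sc] Fo by (auto simp: FF_full_def)
    then have "terminal_slice T V \<in> FF_full T G V" using le by (auto simp: le_fun_def)
    then show "V \<in> G" by (simp add: FF_full_def split: if_splits)
  qed
qed (auto simp: le_fun_def FF_full_def)

theorem mainTheorem12:
  fixes T :: "('o,'m) category"
  assumes "orbital T"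
  shows
    "(\<forall>C. weak_indexing_system T C \<longrightarrow> T_family T (cfam T C)) \<and>
     (\<forall>C D. weak_indexing_system T C \<longrightarrow> weak_indexing_system T D \<longrightarrow> C \<le> D \<longrightarrow> cfam T C \<subseteq> cfam T D) \<and>
     (\<forall>F. T_family T F \<longrightarrow> weak_indexing_system T (FF_triv T F) \<and> weak_indexing_system T (FF_full T F)) \<and>
     (\<forall>F C. T_family T F \<longrightarrow> weak_indexing_system T C \<longrightarrow> (FF_triv T F \<le> C \<longleftrightarrow> F \<subseteq> cfam T C)) \<and>
     (\<forall>F C. T_family T F \<longrightarrow> weak_indexing_system T C \<longrightarrow> (cfam T C \<subseteq> F \<longleftrightarrow> C \<le> FF_full T F)) \<and>
     (\<forall>F G. T_family T F \<longrightarrow> T_family T G \<longrightarrow> (FF_triv T F \<le> FF_triv T G \<longleftrightarrow> F \<subseteq> G)) \<and>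
     (\<forall>F G. T_family T F \<longrightarrow> T_family T G \<longrightarrow> (FF_full T F \<le> FF_full T G \<longleftrightarrow> F \<subseteq> G))"
proof (intro conjI allI impI)
  have sc: "small_category T" using assms by (simp add: orbital_def)
  have family_obj: "T_family T F \<Longrightarrow> F \<subseteq> obj T" for F by (simp add: T_family_def)
  have wis_full: "weak_indexing_system T C \<Longrightarrow> full_T_subcat T C" for C
    by (simp add: weak_indexing_system_def)
  fix F G C D
  show "weak_indexing_system T C \<Longrightarrow> T_family T (cfam T C)" by (rule T_family_cfam[OF sc])
  show "C \<le> D \<Longrightarrow> cfam T C \<subseteq> cfam T D" by (auto simp: cfam_def le_fun_def)
  show "T_family T F \<Longrightarrow> weak_indexing_system T (FF_triv T F)"
    by (rule weak_indexing_system_FF_triv[OF sc])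
  show "T_family T F \<Longrightarrow> weak_indexing_system T (FF_full T F)"
    by (rule weak_indexing_system_FF_full[OF sc])
  show "T_family T F \<Longrightarrow> weak_indexing_system T C \<Longrightarrow> FF_triv T F \<le> C \<longleftrightarrow> F \<subseteq> cfam T C"
    by (rule FF_triv_le_iff[OF sc family_obj wis_full])
  show "weak_indexing_system T C \<Longrightarrow> cfam T C \<subseteq> F \<longleftrightarrow> C \<le> FF_full T F"
    by (rule cfam_subset_iff_le_FF_full)
  show "T_family T F \<Longrightarrow> FF_triv T F \<le> FF_triv T G \<longleftrightarrow> F \<subseteq> G"
    by (rule FF_triv_mono_iff[OF sc family_obj])
  show "T_family T F \<Longrightarrow> FF_full T F \<le> FF_full T G \<longleftrightarrow> F \<subseteq> G"
    by (rule FF_full_mono_iff[OF sc family_obj])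
qed

end
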